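(* Let $r\geq 3$, $k\geq 4$, and let $D$ be an $m$-colored semicomplete $r$-partite digraph. Then $D$ has a $k$-colored kernel.
   Context: A semicomplete $r$-partite digraph ($r\ge 2$) is a digraph whose vertex set is partitioned into $r$ nonempty independent sets (partite sets) such that for any two vertices $u,v$ in different partite sets at least one of the arcs $(u,v)$, $(v,u)$ is present (both may be present); there are no arcs inside a partite set. An $m$-colored digraph is a digraph whose arcs are each assigned one of $m$ colors. A directed path (no repeated vertices) is $j$-colored if its arcs use exactly $j$ distinct colors. A $k$-colored kernel of $D$ is a nonempty set $K\subseteq V(D)$ such that (a) for every $u\in V(D)\setminus K$ there exist $v\in K$ and a $j$-colored directed path from $u$ to $v$ with $1\le j\le k$, and (b) for all distinct $u,v\in K$ there is no $j$-colored directed path from $u$ to $v$ with $1\le j\le k$. *)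

theory Defs
  imports Main
begin

definition digraph :: "'a set \<Rightarrow> ('a \<times> 'a) set \<Rightarrow> bool" where
  "digraph V A \<longleftrightarrow> finite V \<and> A \<subseteq> V \<times> V"

definition m_colored :: "('a \<times> 'a) set \<Rightarrow> nat \<Rightarrow> ('a \<times> 'a \<Rightarrow> nat) \<Rightarrow> bool" where
  "m_colored A m col \<longleftrightarrow> (\<forall>e\<in>A. col e < m)"

definition semicomplete_multipartite ::
    "'a set \<Rightarrow> ('a \<times> 'a) set \<Rightarrow> nat \<Rightarrow> (nat \<Rightarrow> 'a set) \<Rightarrow> bool" where
  "semicomplete_multipartite V A r P \<longleftrightarrow>
     (\<forall>i<r. P i \<noteq> {}) \<and>
     (\<Union>i<r. P i) = V \<and>
     (\<forall>i<r. \<forall>j<r. i \<noteq> j \<longrightarrow> P i \<inter> P j = {}) \<and>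
     (\<forall>i<r. \<forall>u\<in>P i. \<forall>v\<in>P i. (u, v) \<notin> A) \<and>
     (\<forall>i<r. \<forall>j<r. i \<noteq> j \<longrightarrow> (\<forall>u\<in>P i. \<forall>v\<in>P j. (u, v) \<in> A \<or> (v, u) \<in> A))"

definition dpath :: "('a \<times> 'a) set \<Rightarrow> 'a list \<Rightarrow> 'a \<Rightarrow> 'a \<Rightarrow> bool" where
  "dpath A p u v \<longleftrightarrow> length p \<ge> 2 \<and> distinct p \<and> hd p = u \<and> last p = v \<and>
     (\<forall>i < length p - 1. (p ! i, p ! Suc i) \<in> A)"

definition path_colors :: "('a \<times> 'a \<Rightarrow> 'c) \<Rightarrow> 'a list \<Rightarrow> 'c set" where
  "path_colors col p = (\<lambda>i. col (p ! i, p ! Suc i)) ` {..< length p - 1}"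

definition kpath :: "('a \<times> 'a) set \<Rightarrow> ('a \<times> 'a \<Rightarrow> 'c) \<Rightarrow> nat \<Rightarrow> 'a \<Rightarrow> 'a \<Rightarrow> bool" where
  "kpath A col k u v \<longleftrightarrow>
     (\<exists>p j. dpath A p u v \<and> card (path_colors col p) = j \<and> 1 \<le> j \<and> j \<le> k)"

definition k_colored_kernel ::
    "'a set \<Rightarrow> ('a \<times> 'a) set \<Rightarrow> ('a \<times> 'a \<Rightarrow> 'c) \<Rightarrow> nat \<Rightarrow> 'a set \<Rightarrow> bool" where
  "k_colored_kernel V A col k K \<longleftrightarrow>
     K \<noteq> {} \<and> K \<subseteq> V \<and>
     (\<forall>u \<in> V - K. \<exists>v \<in> K. kpath A col k u v) \<and>
     (\<forall>u \<in> K. \<forall>v \<in> K. u \<noteq> v \<longrightarrow> \<not> kpath A col k u v)"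

end

theory Submission
  imports Defs
begin

(* Colours play almost no role: a directed path with n \<ge> 1 arcs uses
   between 1 and n colours, so it suffices to find a kernel with respect to
   reachability by paths of at most k arcs.  Let D be semicomplete multipartite.
   - If D has sinks, the set of all sinks is a kernel: sinks have no outgoing
     path at all, and every other vertex reaches any sink s in at most two arcs
     (directly if it lies outside the part of s, otherwise via an out-neighbour,
     which necessarily lies outside that part).
   - If D has no sinks, pick v maximising the number of vertices that reach it
     within two arcs.  A king-type exchange argument shows that every vertex
     outside the part of v reaches v within three arcs; a vertex inside that part
     first steps to an out-neighbour outside it, so {v} is a kernel for k \<ge> 4.
   The file first develops bounded-length reachability, then the structure of
   semicomplete multipartite digraphs (in a locale), the two cases, and finally
   the theorem. *)

definition reach_within :: "('a \<times> 'a) set \<Rightarrow> nat \<Rightarrow> 'a \<Rightarrow> 'a \<Rightarrow> bool" where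
  "reach_within A n u v \<longleftrightarrow> (\<exists>p. dpath A p u v \<and> length p \<le> Suc n)"

lemma dpath_ends_distinct:
  assumes "dpath A p u v"
  shows "u \<noteq> v"
proof -
  obtain q where p: "p = u # q" "q \<noteq> []"
    using assms by (cases p) (fastforce simp: dpath_def)+
  then have "v \<in> set q" using assms by (auto simp: dpath_def)
  then show ?thesis using assms p by (auto simp: dpath_def)
qed

lemma reach_within_irrefl: "\<not> reach_within A n u u"
  unfolding reach_within_def using dpath_ends_distinct by metis

lemma reach_within_mono: "reach_within A n u v \<Longrightarrow> n \<le> n' \<Longrightarrow> reach_within A n' u v"
  unfolding reach_within_def by fastforce

lemma reach_within_arc: "(u, v) \<in> A \<Longrightarrow> u \<noteq> v \<Longrightarrow> reach_within A 1 u v"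
  unfolding reach_within_def dpath_def by (rule exI[of _ "[u, v]"]) auto

text \<open>Prepending an arc costs one more arc; if u already lies on the path,
  the path is shortened to its suffix starting at u instead.\<close>
lemma reach_within_cons:
  assumes uw: "(u, w) \<in> A" and wv: "reach_within A n w v" and "u \<noteq> v"
  shows "reach_within A (Suc n) u v"
proof -
  obtain p where p: "dpath A p w v" "length p \<le> Suc n"
    using wv reach_within_def by metis
  have len: "length p \<ge> 2" "distinct p" "hd p = w" "last p = v"
    and arcs: "\<forall>i < length p - 1. (p ! i, p ! Suc i) \<in> A"
    using p(1) by (auto simp: dpath_def)
  have "p \<noteq> []" using len by auto
  show ?thesis
  proof (cases "u \<in> set p")
    case False
    have "p ! 0 = w" using len \<open>p \<noteq> []\<close> by (simp add: hd_conv_nth)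
    then have "\<forall>i < length (u # p) - 1. ((u # p) ! i, (u # p) ! Suc i) \<in> A"
      using arcs uw by (auto simp: nth_Cons split: nat.split)
    then have "dpath A (u # p) u v"
      using len False \<open>p \<noteq> []\<close> by (auto simp: dpath_def)
    then show ?thesis unfolding reach_within_def using p(2) by (intro exI[of _ "u # p"]) auto
  next
    case True
    then obtain i where i: "i < length p" "p ! i = u" by (auto simp: in_set_conv_nth)
    have "i \<noteq> length p - 1" using i len \<open>u \<noteq> v\<close> \<open>p \<noteq> []\<close> by (metis last_conv_nth)
    with i have "i < length p - 1" by auto
    then have "dpath A (drop i p) u v"
      using len i arcs \<open>p \<noteq> []\<close> by (auto simp: dpath_def hd_drop_conv_nth last_drop)
    then show ?thesis unfolding reach_within_def using p(2) by (intro exI[of _ "drop i p"]) auto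
  qed
qed

lemma reach_within_two_cases:
  assumes "reach_within A 2 w v"
  shows "(w, v) \<in> A \<or> (\<exists>x. (w, x) \<in> A \<and> (x, v) \<in> A)"
proof -
  obtain p where p: "dpath A p w v" "length p \<le> 3"
    using assms unfolding reach_within_def by (auto simp: numeral_3_eq_3 numeral_2_eq_2)
  then have "length p = 2 \<or> length p = 3" by (auto simp: dpath_def)
  then show ?thesis
  proof
    assume "length p = 2"
    then obtain a b where "p = [a, b]" by (auto simp: numeral_2_eq_2 length_Suc_conv)
    then show ?thesis using p(1) by (auto simp: dpath_def)
  next
    assume "length p = 3"
    then obtain a b c where "p = [a, b, c]" by (auto simp: numeral_3_eq_3 length_Suc_conv)
    moreover have "(p ! 0, p ! 1) \<in> A" "(p ! 1, p ! 2) \<in> A"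
      using p(1) \<open>length p = 3\<close> unfolding dpath_def by (auto simp: numeral_2_eq_2)
    ultimately show ?thesis using p(1) by (auto simp: dpath_def)
  qed
qed

text \<open>A path with n arcs uses between 1 and n colours, so short reachability
  yields k-coloured paths.\<close>
lemma reach_within_kpath:
  assumes "reach_within A n u v" "n \<le> k"
  shows "kpath A col k u v"
proof -
  obtain p where p: "dpath A p u v" "length p \<le> Suc n"
    using assms(1) reach_within_def by metis
  have "length p \<ge> 2" using p(1) by (auto simp: dpath_def)
  have upper: "card (path_colors col p) \<le> length p - 1"
    unfolding path_colors_def by (metis card_image_le card_lessThan finite_lessThan)
  have "0 \<in> {..< length p - 1}" unfolding lessThan_iff using \<open>length p \<ge> 2\<close> by arith
  then have "path_colors col p \<noteq> {}" unfolding path_colors_def by blast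
  then have lower: "card (path_colors col p) \<ge> 1"
    by (simp add: Suc_leI card_gt_0_iff path_colors_def)
  show ?thesis
    unfolding kpath_def using p upper lower assms(2) by (intro exI[of _ p]) auto
qed

lemma kpath_out_arc:
  assumes "kpath A col k u v"
  shows "\<exists>w. (u, w) \<in> A"
proof -
  obtain p where p: "dpath A p u v" using assms unfolding kpath_def by blast
  then have "length p \<ge> 2" "hd p = u" "(p ! 0, p ! Suc 0) \<in> A" unfolding dpath_def by auto
  then show ?thesis by (metis hd_conv_nth list.size(3) not_numeral_le_zero)
qed

lemma singleton_kernel:
  assumes "v \<in> V" "\<forall>u \<in> V - {v}. kpath A col k u v"
  shows "k_colored_kernel V A col k {v}"
  using assms unfolding k_colored_kernel_def by auto

locale semicomplete_multipartite_digraph =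
  fixes V :: "'a set" and A :: "('a \<times> 'a) set" and r :: nat and P :: "nat \<Rightarrow> 'a set"
  assumes digraph: "digraph V A"
    and semicomplete: "semicomplete_multipartite V A r P"
begin

definition same_part :: "'a \<Rightarrow> 'a \<Rightarrow> bool" where
  "same_part u w \<longleftrightarrow> (\<exists>i<r. u \<in> P i \<and> w \<in> P i)"

lemma finite_V: "finite V" and arcs_in_V: "A \<subseteq> V \<times> V"
  using digraph by (auto simp: digraph_def)

lemma in_some_part: "u \<in> V \<Longrightarrow> \<exists>i<r. u \<in> P i"
  using semicomplete by (auto simp: semicomplete_multipartite_def)

lemma V_nonempty: "r \<ge> 1 \<Longrightarrow> V \<noteq> {}"
  using semicomplete by (force simp: semicomplete_multipartite_def)

lemma same_part_refl: "u \<in> V \<Longrightarrow> same_part u u"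
  using in_some_part by (auto simp: same_part_def)

lemma same_part_sym: "same_part u w \<Longrightarrow> same_part w u"
  by (auto simp: same_part_def)

text \<open>Parts are pairwise disjoint, so lying in a common part is transitive.\<close>
lemma same_part_trans:
  assumes "same_part a b" "same_part b c"
  shows "same_part a c"
proof -
  obtain i j where "i < r" "a \<in> P i" "b \<in> P i" "j < r" "b \<in> P j" "c \<in> P j"
    using assms by (auto simp: same_part_def)
  moreover have "\<forall>i<r. \<forall>j<r. i \<noteq> j \<longrightarrow> P i \<inter> P j = {}"
    using semicomplete by (simp add: semicomplete_multipartite_def)
  ultimately have "i = j" by blast
  with \<open>i < r\<close> \<open>a \<in> P i\<close> \<open>c \<in> P j\<close> show ?thesis by (auto simp: same_part_def)
qed

lemma arc_not_same_part: "(u, w) \<in> A \<Longrightarrow> \<not> same_part u w"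
  using semicomplete unfolding same_part_def semicomplete_multipartite_def by blast

lemma arc_reach_within:
  assumes "(u, w) \<in> A"
  shows "reach_within A 1 u w"
proof -
  have "u \<in> V" using assms arcs_in_V by blast
  then have "u \<noteq> w" using assms arc_not_same_part same_part_refl by blast
  then show ?thesis using assms reach_within_arc by metis
qed

lemma adjacent:
  assumes "u \<in> V" "w \<in> V" "\<not> same_part u w"
  shows "(u, w) \<in> A \<or> (w, u) \<in> A"
proof -
  obtain i j where "i < r" "u \<in> P i" "j < r" "w \<in> P j" using in_some_part assms by metis
  moreover have "i \<noteq> j" using calculation assms(3) by (auto simp: same_part_def)
  ultimately show ?thesis using semicomplete by (auto simp: semicomplete_multipartite_def)
qed

lemma out_arc_leaves_part: "same_part u v \<Longrightarrow> (u, y) \<in> A \<Longrightarrow> \<not> same_part y v"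
  using arc_not_same_part same_part_sym same_part_trans by blast

lemma reach_via_other_part:
  assumes outside: "\<And>y. y \<in> V \<Longrightarrow> \<not> same_part y v \<Longrightarrow> reach_within A n y v"
    and "u \<in> V" "u \<noteq> v" "(u, y) \<in> A"
  shows "reach_within A (Suc n) u v"
proof (cases "same_part u v")
  case True
  then have "reach_within A n y v"
    using outside out_arc_leaves_part \<open>(u, y) \<in> A\<close> arcs_in_V by blast
  then show ?thesis using reach_within_cons \<open>(u, y) \<in> A\<close> \<open>u \<noteq> v\<close> by metis
next
  case False
  then show ?thesis using outside \<open>u \<in> V\<close> reach_within_mono by fastforce
qed

definition sinks :: "'a set" where
  "sinks = {s \<in> V. \<forall>w. (s, w) \<notin> A}"

lemma arc_to_sink: "s \<in> sinks \<Longrightarrow> y \<in> V \<Longrightarrow> \<not> same_part y s \<Longrightarrow> reach_within A 1 y s"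
  using adjacent arc_reach_within unfolding sinks_def by blast

lemma sinks_kernel:
  assumes "sinks \<noteq> {}" "2 \<le> k"
  shows "k_colored_kernel V A col k sinks"
  unfolding k_colored_kernel_def
proof (intro conjI ballI impI)
  fix u assume u: "u \<in> V - sinks"
  obtain s where s: "s \<in> sinks" using assms(1) by blast
  obtain y where "(u, y) \<in> A" using u by (auto simp: sinks_def)
  moreover have "u \<noteq> s" using u s by auto
  ultimately have "reach_within A 2 u s"
    using reach_via_other_part[of s 1] arc_to_sink[OF s] u by (simp add: numeral_2_eq_2)
  then show "\<exists>v\<in>sinks. kpath A col k u v" using s reach_within_kpath assms(2) by metis
next
  fix u v assume "u \<in> sinks"
  then show "\<not> kpath A col k u v" using kpath_out_arc[of A col k u v] by (auto simp: sinks_def)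
qed (use assms(1) in \<open>auto simp: sinks_def\<close>)

definition in2 :: "'a \<Rightarrow> 'a set" where
  "in2 v = {w \<in> V. reach_within A 2 w v}"

lemma in2_transfer:
  assumes u: "u \<in> V" and vu: "(v, u) \<in> A" and far: "\<not> reach_within A 3 u v"
    and w: "w \<in> in2 v"
  shows "w \<in> in2 u"
proof -
  have wV: "w \<in> V" and wv: "reach_within A 2 w v" using w by (auto simp: in2_def)
  have "u \<noteq> v" using vu arc_not_same_part same_part_refl u by blast
  have "w \<noteq> u" using wv far reach_within_mono by fastforce
  (* u has no arc to a vertex x reaching v within two arcs (that would give a path
     u \<rightarrow> x \<leadsto> v of at most three arcs), so such an x outside the part of u sends
     an arc to u. *)
  have no_arc: "(u, x) \<notin> A" if "reach_within A 2 x v" for x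
    using that far reach_within_cons \<open>u \<noteq> v\<close> by (metis numeral_3_eq_3 numeral_2_eq_2)
  have back_arc: "(x, u) \<in> A" if "x \<in> V" "\<not> same_part x u" "reach_within A 2 x v" for x
    using adjacent that no_arc u by blast
  have "reach_within A 2 w u"
    using reach_within_two_cases[OF wv]
  proof
    assume "(w, v) \<in> A"
    show ?thesis
    proof (cases "same_part w u")
      case True
      show ?thesis using reach_within_cons[OF \<open>(w, v) \<in> A\<close> arc_reach_within[OF vu] \<open>w \<noteq> u\<close>]
        by (simp add: numeral_2_eq_2)
    next
      case False
      then show ?thesis using back_arc wV wv arc_reach_within reach_within_mono by fastforce
    qed
  next
    assume "\<exists>x. (w, x) \<in> A \<and> (x, v) \<in> A"
    then obtain x where wx: "(w, x) \<in> A" and xv: "(x, v) \<in> A" by blast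
    have xv2: "reach_within A 2 x v" using arc_reach_within[OF xv] reach_within_mono by fastforce
    show ?thesis
    proof (cases "same_part x u")
      case False
      have "(x, u) \<in> A" using back_arc[OF _ False xv2] xv arcs_in_V by blast
      then show ?thesis using reach_within_cons[OF wx arc_reach_within \<open>w \<noteq> u\<close>]
        by (simp add: numeral_2_eq_2)
    next
      case True
      then have "\<not> same_part w u"
        using wx arc_not_same_part same_part_sym same_part_trans by metis
      then show ?thesis using back_arc wV wv arc_reach_within reach_within_mono by fastforce
    qed
  qed
  then show ?thesis using wV by (simp add: in2_def)
qed

text \<open>A vertex v with the largest set in2 v is reached within three arcs from
  every vertex outside its part; otherwise some u would have a strictly larger set.\<close>
lemma max_in2_reaches_within_3:
  assumes v: "v \<in> V" and max: "\<forall>w \<in> V. card (in2 w) \<le> card (in2 v)"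
    and u: "u \<in> V" "\<not> same_part u v"
  shows "reach_within A 3 u v"
proof (rule ccontr)
  assume far: "\<not> reach_within A 3 u v"
  have "(u, v) \<notin> A" using far arc_reach_within reach_within_mono by fastforce
  then have vu: "(v, u) \<in> A" using adjacent u v by blast
  have "v \<in> in2 u" using arc_reach_within[OF vu] reach_within_mono v by (fastforce simp: in2_def)
  moreover have "v \<notin> in2 v" by (simp add: in2_def reach_within_irrefl)
  moreover have "in2 v \<subseteq> in2 u" using in2_transfer[OF u(1) vu far] by blast
  moreover have "finite (in2 u)" using finite_V by (simp add: in2_def)
  ultimately have "card (insert v (in2 v)) \<le> card (in2 u)" "finite (in2 v)"
    by (auto intro: card_mono finite_subset)
  moreover have "card (in2 u) \<le> card (in2 v)" using max u(1) by blast
  ultimately show False using \<open>v \<notin> in2 v\<close> by simp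
qed

lemma four_king:
  assumes "V \<noteq> {}" and no_sink: "\<forall>u \<in> V. \<exists>w. (u, w) \<in> A"
  shows "\<exists>v \<in> V. \<forall>u \<in> V - {v}. reach_within A 4 u v"
proof -
  let ?size = "\<lambda>w. card (in2 w)"
  have "Max (?size ` V) \<in> ?size ` V" using Max_in finite_V assms(1) by blast
  then obtain v where v: "v \<in> V" and "?size v = Max (?size ` V)" by auto
  then have max: "\<forall>w \<in> V. card (in2 w) \<le> card (in2 v)" using finite_V by simp
  have "reach_within A (Suc 3) u v" if "u \<in> V - {v}" for u
    using no_sink that reach_via_other_part[of v 3] max_in2_reaches_within_3[OF v max] by auto
  then show ?thesis using v by (auto simp: numeral_Bit0)
qed

theorem has_k_colored_kernel:
  assumes "r \<ge> 1" "k \<ge> 4"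
  shows "\<exists>K. k_colored_kernel V A col k K"
proof (cases "sinks = {}")
  case False
  then show ?thesis using sinks_kernel[OF False, of k col] assms(2) by auto
next
  case True
  then have "\<forall>u \<in> V. \<exists>w. (u, w) \<in> A" by (auto simp: sinks_def)
  then obtain v where "v \<in> V" "\<forall>u \<in> V - {v}. reach_within A 4 u v"
    using four_king V_nonempty assms(1) by blast
  then show ?thesis using singleton_kernel reach_within_kpath assms(2) by metis
qed

end

theorem mainTheorem6:
  fixes V :: "'a set" and A :: "('a \<times> 'a) set" and col :: "'a \<times> 'a \<Rightarrow> nat"
    and P :: "nat \<Rightarrow> 'a set" and r k m :: nat
  assumes "digraph V A"
    and "m_colored A m col"
    and "semicomplete_multipartite V A r P"
    and "r \<ge> 3" and "k \<ge> 4"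
  shows "\<exists>K. k_colored_kernel V A col k K"
proof -
  interpret semicomplete_multipartite_digraph V A r P
    using assms(1,3) by unfold_locales
  show ?thesis using has_k_colored_kernel assms(4,5) by simp
qed

end
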